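(* Let $a,b$ be integers and let $G\in\mathscr{G}_{a,b}$ be a tricyclic graph with at least one pendant vertex. Suppose $C_p=vu_1u_2\ldots u_{p-1}v$ is an internal cycle of the base $\widetilde G$ with $N_{\widetilde G}(v)=\{w,u_1,u_{p-1}\}$. Then $d_G(v)=3$, $p=3$ and $G\in\mathscr{G}_{6,-1}$. Moreover, $d_G(w)=2$, and one of $u_1,u_{p-1}$ has degree $2$ in $G$ while the other has degree $a+b-1=4$ in $G$.
   Context: All graphs are simple and connected; $d_G(v)$ is the degree of $v$, $N_G(v)$ its neighbourhood. A tricyclic graph is a connected graph with $|E_G|=|V_G|+2$. For integers $a,b$, $\mathscr{G}_{a,b}$ is the set of connected graphs $G$ such that for every $v\in V_G$, $\sum_{u\in N_G(v)}d_G(u)=a\,d_G(v)+b-d_G(v)^2$. A pendant vertex is a vertex of degree $1$. The base $\widetilde{G}$ of $G$ is the subgraph obtained from $G$ by repeatedly deleting pendant vertices until none remain. An internal cycle of $\widetilde G$ is a cycle $u_0u_1\ldots u_k$ with $u_0=u_k$, $k\ge 3$, $d_{\widetilde G}(u_0)\ge 3$ and $d_{\widetilde G}(u_i)=2$ for $1\le i\le k-1$. *)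

theory Defs
  imports Main
begin

definition simple_graph :: "'a set \<Rightarrow> ('a \<Rightarrow> 'a \<Rightarrow> bool) \<Rightarrow> bool" where
  "simple_graph V E \<longleftrightarrow> finite V \<and> (\<forall>x y. E x y \<longrightarrow> E y x) \<and> (\<forall>x. \<not> E x x)
     \<and> (\<forall>x y. E x y \<longrightarrow> x \<in> V \<and> y \<in> V)"

definition connected_graph :: "'a set \<Rightarrow> ('a \<Rightarrow> 'a \<Rightarrow> bool) \<Rightarrow> bool" where
  "connected_graph V E \<longleftrightarrow> V \<noteq> {} \<and> (\<forall>x\<in>V. \<forall>y\<in>V. (\<lambda>u v. E u v \<and> u \<in> V \<and> v \<in> V)\<^sup>*\<^sup>* x y)"

definition nbhd :: "'a set \<Rightarrow> ('a \<Rightarrow> 'a \<Rightarrow> bool) \<Rightarrow> 'a \<Rightarrow> 'a set" where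
  "nbhd S E v = {u \<in> S. E v u}"

definition deg :: "'a set \<Rightarrow> ('a \<Rightarrow> 'a \<Rightarrow> bool) \<Rightarrow> 'a \<Rightarrow> nat" where
  "deg S E v = card (nbhd S E v)"

definition edges :: "'a set \<Rightarrow> ('a \<Rightarrow> 'a \<Rightarrow> bool) \<Rightarrow> 'a set set" where
  "edges V E = {{x, y} | x y. x \<in> V \<and> y \<in> V \<and> E x y}"

definition tricyclic :: "'a set \<Rightarrow> ('a \<Rightarrow> 'a \<Rightarrow> bool) \<Rightarrow> bool" where
  "tricyclic V E \<longleftrightarrow> simple_graph V E \<and> connected_graph V E \<and> card (edges V E) = card V + 2"

definition in_G_ab :: "int \<Rightarrow> int \<Rightarrow> 'a set \<Rightarrow> ('a \<Rightarrow> 'a \<Rightarrow> bool) \<Rightarrow> bool" where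
  "in_G_ab a b V E \<longleftrightarrow> simple_graph V E \<and> connected_graph V E \<and>
     (\<forall>v\<in>V. (\<Sum>u\<in>nbhd V E v. int (deg V E u)) = a * int (deg V E v) + b - int (deg V E v)^2)"

definition pendant :: "'a set \<Rightarrow> ('a \<Rightarrow> 'a \<Rightarrow> bool) \<Rightarrow> 'a \<Rightarrow> bool" where
  "pendant S E v \<longleftrightarrow> v \<in> S \<and> deg S E v = 1"

definition delete_pendant_step :: "('a \<Rightarrow> 'a \<Rightarrow> bool) \<Rightarrow> 'a set \<Rightarrow> 'a set \<Rightarrow> bool" where
  "delete_pendant_step E S S' \<longleftrightarrow> (\<exists>v. pendant S E v \<and> S' = S - {v})"

text \<open>B is (the vertex set of) a base of G: obtained from V by repeatedly deleting
  pendant vertices until none remain; the base is the subgraph induced on B.\<close>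
definition is_base :: "'a set \<Rightarrow> ('a \<Rightarrow> 'a \<Rightarrow> bool) \<Rightarrow> 'a set \<Rightarrow> bool" where
  "is_base V E B \<longleftrightarrow> (delete_pendant_step E)\<^sup>*\<^sup>* V B \<and> (\<forall>v\<in>B. \<not> pendant B E v)"

definition internal_cycle :: "'a set \<Rightarrow> ('a \<Rightarrow> 'a \<Rightarrow> bool) \<Rightarrow> (nat \<Rightarrow> 'a) \<Rightarrow> nat \<Rightarrow> bool" where
  "internal_cycle S E u k \<longleftrightarrow> k \<ge> 3 \<and> u k = u 0 \<and> (\<forall>i\<le>k. u i \<in> S)
     \<and> inj_on u {0..<k} \<and> (\<forall>i<k. E (u i) (u (Suc i)))
     \<and> deg S E (u 0) \<ge> 3 \<and> (\<forall>i. 1 \<le> i \<and> i \<le> k - 1 \<longrightarrow> deg S E (u i) = 2)"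

end

theory Submission
  imports Defs
begin

text \<open>
  Write \<open>k = a + b - 1\<close>. In the class G(a,b) the equation at a vertex of degree \<open>d\<close> reads
  \<open>\<Sum> deg = (d - 1)(a - 1 - d) + k\<close>; in particular every neighbour of a pendant vertex has
  degree \<open>k\<close>. If some vertex had all neighbours but one pendant, the equations at it and at
  that remaining neighbour force the whole graph to be a double star, which the cycle excludes.
  Hence every vertex outside the base is a pendant vertex hanging at a vertex of degree \<open>k\<close>,
  every vertex of the internal cycle other than \<open>v\<close> has degree \<open>2\<close> or \<open>k\<close>, and the
  equations along the cycle become a finite integer problem whose only solution is
  \<open>p = 3\<close>, \<open>a = 6\<close>, \<open>k = 4\<close> with degrees \<open>3, 2, 4\<close> on the triangle and \<open>2\<close> at \<open>w\<close>.
\<close>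

section \<open>Integer arithmetic\<close>

lemma G_ab_equation_factored:
  fixes a b d :: int
  shows "a * d + b - d\<^sup>2 = (d - 1) * (a - 1 - d) + (a + b - 1)"
  by (simp add: power2_eq_square algebra_simps)

lemma second_centre_arith:
  fixes a k m s :: int
  assumes "2 \<le> k" "2 \<le> m" and m: "m - 1 = (k - 1) * (a - 1 - k)"
    and s: "s = (m - 1) * (a - 1 - m)" and "m - 1 \<le> s"
  shows "s = m - 1"
proof -
  have "(m - 1) * 1 \<le> (m - 1) * (a - 1 - m)" using assms by simp
  then have am: "1 \<le> a - 1 - m" using \<open>2 \<le> m\<close> by (simp add: mult_le_cancel_left_pos)
  have "0 < (k - 1) * (a - 1 - k)" using m \<open>2 \<le> m\<close> by simp
  then have "1 \<le> a - 1 - k" using \<open>2 \<le> k\<close> by (simp add: zero_less_mult_iff)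
  then have "(2 - k) * (a - 2 - k) \<le> 0" using \<open>2 \<le> k\<close> by (simp add: mult_nonpos_nonneg)
  moreover have "a - 1 - m = (2 - k) * (a - 2 - k) + 1" using m by (simp add: algebra_simps)
  ultimately have "a - 1 - m = 1" using am by linarith
  then show ?thesis using s by simp
qed

text \<open>
  The constraints that the degrees \<open>D i = deg (u i)\<close> along an internal cycle \<open>u 0 \<dots> u p\<close>
  of the base satisfy, with \<open>k = a + b - 1\<close>, \<open>dw = deg w\<close> and \<open>t\<close> the number of pendant
  vertices at \<open>v = u 0\<close>. An interior vertex of degree \<open>D i\<close> carries \<open>D i - 2\<close> pendant
  vertices, each contributing \<open>1\<close> to its neighbour-degree sum.
\<close>
definition cycle_degree_pattern :: "int \<Rightarrow> int \<Rightarrow> nat \<Rightarrow> (nat \<Rightarrow> int) \<Rightarrow> int \<Rightarrow> int \<Rightarrow> bool" where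
  "cycle_degree_pattern a k p D dw t \<longleftrightarrow> 3 \<le> p \<and> 3 \<le> k \<and> D p = D 0
    \<and> (\<forall>i\<in>{1..p - 1}. (D i = 2 \<or> D i = k)
          \<and> D (i - 1) + D (i + 1) + (D i - 2) = (D i - 1) * (a - 1 - D i) + k)
    \<and> 0 \<le> t \<and> D 0 = 3 + t \<and> (0 < t \<longrightarrow> D 0 = k)
    \<and> 2 \<le> dw \<and> dw + D 1 + D (p - 1) + t = (D 0 - 1) * (a - 1 - D 0) + k"

lemma cycle_degree_pattern_reverse:
  assumes "cycle_degree_pattern a k p D dw t"
  shows "cycle_degree_pattern a k p (\<lambda>i. D (p - i)) dw t"
proof -
  have p: "3 \<le> p" and inner: "\<And>i. i \<in> {1..p - 1} \<Longrightarrow> (D i = 2 \<or> D i = k)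
          \<and> D (i - 1) + D (i + 1) + (D i - 2) = (D i - 1) * (a - 1 - D i) + k"
    using assms by (auto simp: cycle_degree_pattern_def)
  have "(D (p - i) = 2 \<or> D (p - i) = k) \<and> D (p - (i - 1)) + D (p - (i + 1)) + (D (p - i) - 2)
          = (D (p - i) - 1) * (a - 1 - D (p - i)) + k" if "i \<in> {1..p - 1}" for i
  proof -
    have "p - (i - 1) = p - i + 1" "p - (i + 1) = p - i - 1" "p - i \<in> {1..p - 1}"
      using that p by auto
    then show ?thesis using inner[of "p - i"] by simp
  qed
  moreover have "p - (p - 1) = 1" using p by simp
  ultimately show ?thesis using assms by (auto simp: cycle_degree_pattern_def)
qed

lemma cycle_degree_pattern_first_2_no_pendants:
  assumes P: "cycle_degree_pattern a k p D dw t" and D1: "D 1 = 2"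
  shows "t = 0"
proof (rule ccontr)
  assume "t \<noteq> 0"
  have p: "3 \<le> p" and k: "3 \<le> k" and Dp: "D p = D 0"
    and inner: "\<And>i. i \<in> {1..p - 1} \<Longrightarrow> (D i = 2 \<or> D i = k)
          \<and> D (i - 1) + D (i + 1) + (D i - 2) = (D i - 1) * (a - 1 - D i) + k"
    and t: "0 \<le> t" "D 0 = 3 + t" "0 < t \<Longrightarrow> D 0 = k"
    and dw: "2 \<le> dw" and at_v: "dw + D 1 + D (p - 1) + t = (D 0 - 1) * (a - 1 - D 0) + k"
    using P by (auto simp: cycle_degree_pattern_def)
  have D0: "D 0 = k" and "4 \<le> k" using t \<open>t \<noteq> 0\<close> by auto
  have at_1: "D 0 + D 2 = a - 3 + k" using inner[of 1] p D1 by (simp add: numeral_2_eq_2)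
  have D2: "D 2 = 2 \<or> D 2 = k"
    and at_2: "2 + D 3 + (D 2 - 2) = (D 2 - 1) * (a - 1 - D 2) + k"
    using inner[of 2] p D1 by (simp_all add: numeral_eq_Suc)
  show False
  proof (cases "D 2 = k")
    case True
    then have "a = k + 3" using at_1 D0 by simp
    then have "D 3 = 2 * k - 2" using at_2 True by (simp add: algebra_simps)
    moreover have "p = 3 \<and> D 3 = D 0 \<or> D 3 = 2 \<or> D 3 = k"
      using Dp p inner[of 3] by (cases "p = 3") (auto simp: numeral_eq_Suc)
    ultimately show False using D0 k by auto
  next
    case False
    then have "a = 5" using D2 at_1 D0 by simp
    have "(k - 1) * (4 - k) \<le> 0" using \<open>4 \<le> k\<close> by (simp add: mult_nonneg_nonpos)
    moreover have "D (p - 1) = 2 \<or> D (p - 1) = k" using inner[of "p - 1"] p by simp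
    ultimately show False using at_v D0 D1 t \<open>a = 5\<close> dw k by auto
  qed
qed

lemma cycle_degree_pattern_first_2:
  assumes P: "cycle_degree_pattern a k p D dw t" and D1: "D 1 = 2"
  shows "D 0 = 3 \<and> p = 3 \<and> a = 6 \<and> k = 4 \<and> dw = 2 \<and> D (p - 1) = 4"
proof -
  have p: "3 \<le> p" and k: "3 \<le> k" and Dp: "D p = D 0"
    and inner: "\<And>i. i \<in> {1..p - 1} \<Longrightarrow> (D i = 2 \<or> D i = k)
          \<and> D (i - 1) + D (i + 1) + (D i - 2) = (D i - 1) * (a - 1 - D i) + k"
    and dw: "2 \<le> dw" and at_v: "dw + D 1 + D (p - 1) = (D 0 - 1) * (a - 1 - D 0) + k"
    and D0: "D 0 = 3"
    using P cycle_degree_pattern_first_2_no_pendants[OF P D1] by (auto simp: cycle_degree_pattern_def)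
  have at_1: "D 0 + D 2 = a - 3 + k" using inner[of 1] p D1 by (simp add: numeral_2_eq_2)
  have D2: "D 2 = 2 \<or> D 2 = k"
    and at_2: "2 + D 3 + (D 2 - 2) = (D 2 - 1) * (a - 1 - D 2) + k"
    using inner[of 2] p D1 by (simp_all add: numeral_eq_Suc)
  have Dlast: "D (p - 1) = 2 \<or> D (p - 1) = k" using inner[of "p - 1"] p by simp
  have "D 2 = k"
  proof (rule ccontr)
    assume "D 2 \<noteq> k"
    then have "a = 8 - k" using D2 at_1 D0 by simp
    then show False using at_v D0 D1 Dlast dw k by auto
  qed
  then have a: "a = 6" and D3: "D 3 = (k - 1) * (5 - k)" using at_1 at_2 D0
    by (simp_all add: algebra_simps)
  have "k = 3 \<or> k = 4 \<or> 5 \<le> k" using k by auto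
  moreover have "5 \<le> k \<Longrightarrow> (k - 1) * (5 - k) \<le> 0" by (simp add: mult_nonneg_nonpos)
  moreover have "p = 3 \<and> D 3 = D 0 \<or> D 3 = 2 \<or> D 3 = k"
    using Dp p inner[of 3] by (cases "p = 3") (auto simp: numeral_eq_Suc)
  ultimately have "k = 4 \<and> p = 3" using D3 D0 by auto
  then show ?thesis using a D0 at_v D1 \<open>D 2 = k\<close> by simp
qed

lemma cycle_degree_pattern_not_both_k:
  assumes P: "cycle_degree_pattern a k p D dw t" and D1: "D 1 = k" and Dlast: "D (p - 1) = k"
  shows False
proof -
  have p: "3 \<le> p" and k: "3 \<le> k"
    and inner: "\<And>i. i \<in> {1..p - 1} \<Longrightarrow> (D i = 2 \<or> D i = k)
          \<and> D (i - 1) + D (i + 1) + (D i - 2) = (D i - 1) * (a - 1 - D i) + k"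
    and t: "0 \<le> t" "D 0 = 3 + t" "0 < t \<Longrightarrow> D 0 = k"
    and dw: "2 \<le> dw" and at_v: "dw + D 1 + D (p - 1) + t = (D 0 - 1) * (a - 1 - D 0) + k"
    using P by (auto simp: cycle_degree_pattern_def)
  define c where "c = a - 1 - k"
  have D2: "D 2 = 2 \<or> D 2 = k" using inner[of 2] p by simp
  have at_1: "D 0 + D 2 + (k - 2) = (k - 1) * c + k"
    using inner[of 1] p D1 by (simp add: numeral_2_eq_2 c_def)
  show False
  proof (cases "t = 0")
    case False
    then show False using at_v at_1 D1 Dlast D2 t dw by (auto simp: c_def)
  next
    case True
    then have prod: "(k - 1) * c = D 2 + 1" and dw_eq: "dw = 2 * c + k - 6"
      using at_1 at_v D1 Dlast t by (simp_all add: c_def algebra_simps)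
    have "(k - 1) * c \<le> k + 1" using prod D2 k by auto
    show False
    proof (cases "2 \<le> c")
      case True
      then have "(k - 1) * 2 \<le> (k - 1) * c" using k by (intro mult_left_mono) auto
      then have "2 * k - 2 \<le> (k - 1) * c" by simp
      then have "k = 3" using \<open>(k - 1) * c \<le> k + 1\<close> k by linarith
      then have "c = 2" using prod D2 True by auto
      then show False using dw dw_eq \<open>k = 3\<close> by simp
    next
      case False
      have "0 < (k - 1) * c" using prod D2 k by auto
      then have "c = 1" using False k by (simp add: zero_less_mult_iff)
      then show False using prod D2 dw dw_eq by auto
    qed
  qed
qed

lemma cycle_degree_pattern_solution:
  assumes P: "cycle_degree_pattern a k p D dw t"
  shows "D 0 = 3 \<and> p = 3 \<and> a = 6 \<and> k = 4 \<and> dw = 2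
    \<and> (D 1 = 2 \<and> D (p - 1) = 4 \<or> D (p - 1) = 2 \<and> D 1 = 4)"
proof -
  have p: "3 \<le> p" and Dp: "D p = D 0"
    and ends: "D 1 = 2 \<or> D 1 = k" "D (p - 1) = 2 \<or> D (p - 1) = k"
    using P by (auto simp: cycle_degree_pattern_def)
  consider "D 1 = 2" | "D (p - 1) = 2" | "D 1 = k" "D (p - 1) = k" using ends by auto
  then show ?thesis
  proof cases
    case 1
    then show ?thesis using cycle_degree_pattern_first_2[OF P] by auto
  next
    case 2
    have "p - (p - 1) = 1" using p by simp
    then show ?thesis
      using 2 Dp cycle_degree_pattern_first_2[OF cycle_degree_pattern_reverse[OF P]] by auto
  qed (use cycle_degree_pattern_not_both_k[OF P] in auto)
qed

section \<open>Neighbourhoods and degrees\<close>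

lemma finite_nbhd: "simple_graph V E \<Longrightarrow> finite (nbhd S E x)"
  unfolding simple_graph_def nbhd_def by (metis (no_types, lifting) finite_subset mem_Collect_eq subsetI)

lemma nbhd_mono: "S \<subseteq> T \<Longrightarrow> nbhd S E x \<subseteq> nbhd T E x"
  unfolding nbhd_def by auto

lemma deg_mono: "simple_graph V E \<Longrightarrow> S \<subseteq> T \<Longrightarrow> deg S E x \<le> deg T E x"
  unfolding deg_def by (intro card_mono finite_nbhd nbhd_mono)

lemma deg_pos: "simple_graph V E \<Longrightarrow> E x y \<Longrightarrow> y \<in> S \<Longrightarrow> 0 < deg S E x"
  unfolding deg_def using finite_nbhd[of V E S x] by (auto simp: nbhd_def card_gt_0_iff)

lemma deg_1_nbhd:
  assumes "simple_graph V E" "deg V E x = 1" "E x y"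
  shows "nbhd V E x = {y}"
proof -
  have "y \<in> nbhd V E x" using assms by (auto simp: simple_graph_def nbhd_def)
  moreover obtain c where "nbhd V E x = {c}"
    using assms(2) by (auto simp: deg_def card_1_singleton_iff)
  ultimately show ?thesis by auto
qed

lemma deg_split:
  assumes "simple_graph V E" "S \<subseteq> V"
  shows "deg V E x = deg S E x + card (nbhd V E x - S)"
proof -
  have "nbhd V E x = nbhd S E x \<union> (nbhd V E x - S)" "nbhd S E x \<inter> (nbhd V E x - S) = {}"
    using assms(2) by (auto simp: nbhd_def)
  then show ?thesis
    unfolding deg_def using finite_nbhd[OF assms(1)] by (metis card_Un_disjoint finite_Diff)
qed

lemma nbhd_degree_sum_split:
  assumes "simple_graph V E" "S \<subseteq> V" and pendant_outside: "\<forall>y\<in>V - S. deg V E y = 1"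
  shows "(\<Sum>y\<in>nbhd V E x. int (deg V E y))
    = (\<Sum>y\<in>nbhd S E x. int (deg V E y)) + int (card (nbhd V E x - S))"
proof -
  have "nbhd V E x = nbhd S E x \<union> (nbhd V E x - S)" "nbhd S E x \<inter> (nbhd V E x - S) = {}"
    using assms(2) by (auto simp: nbhd_def)
  moreover have "(\<Sum>y\<in>nbhd V E x - S. int (deg V E y)) = int (card (nbhd V E x - S))"
    using pendant_outside by (simp add: nbhd_def)
  ultimately show ?thesis
    using finite_nbhd[OF assms(1)] by (metis finite_Diff sum.union_disjoint)
qed

lemma connected_graph_closed_superset:
  assumes "connected_graph V E" "x \<in> C" "x \<in> V" "\<forall>c\<in>C. \<forall>y. E c y \<longrightarrow> y \<in> C"
  shows "V \<subseteq> C"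
proof
  fix y assume "y \<in> V"
  then have "(\<lambda>s t. E s t \<and> s \<in> V \<and> t \<in> V)\<^sup>*\<^sup>* x y"
    using assms(1,3) by (auto simp: connected_graph_def)
  then show "y \<in> C" by (induction rule: rtranclp_induct) (use assms(2,4) in auto)
qed

definition at_most_two_non_pendant :: "'a set \<Rightarrow> ('a \<Rightarrow> 'a \<Rightarrow> bool) \<Rightarrow> bool" where
  "at_most_two_non_pendant V E \<longleftrightarrow> (\<exists>y z. \<forall>x\<in>V. x = y \<or> x = z \<or> deg V E x = 1)"

lemma at_most_two_non_pendantI:
  assumes S: "simple_graph V E" and "connected_graph V E" "y \<in> V"
    and y: "\<forall>t. E y t \<longrightarrow> t = z \<or> deg V E t = 1"
    and z: "\<forall>t. E z t \<longrightarrow> t = y \<or> deg V E t = 1"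
  shows "at_most_two_non_pendant V E"
proof -
  let ?C = "{y, z} \<union> Collect (E y) \<union> Collect (E z)"
  have "s \<in> ?C" if "c \<in> ?C" "E c s" for c s
  proof (cases "c = y \<or> c = z")
    case False
    then have "E y c \<and> deg V E c = 1 \<or> E z c \<and> deg V E c = 1" using that(1) y z by auto
    then have "nbhd V E c = {y} \<or> nbhd V E c = {z}"
      using deg_1_nbhd[OF S] S by (metis simple_graph_def)
    then show ?thesis using that(2) S by (auto simp: nbhd_def simple_graph_def)
  qed (use that in auto)
  then have "V \<subseteq> ?C" using connected_graph_closed_superset[OF assms(2) _ \<open>y \<in> V\<close>, of ?C] by blast
  then show ?thesis unfolding at_most_two_non_pendant_def using y z by blast
qed

section \<open>The class G(a,b)\<close>

lemma in_G_ab_vertex_equation: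
  assumes "in_G_ab a b V E" "x \<in> V"
  shows "(\<Sum>y\<in>nbhd V E x. int (deg V E y))
    = (int (deg V E x) - 1) * (a - 1 - int (deg V E x)) + (a + b - 1)"
  using assms by (simp add: in_G_ab_def G_ab_equation_factored)

lemma in_G_ab_pendant_neighbour_deg:
  assumes G: "in_G_ab a b V E" and "deg V E x = 1" "E x y"
  shows "int (deg V E y) = a + b - 1"
proof -
  have S: "simple_graph V E" using G by (simp add: in_G_ab_def)
  have "x \<in> V" using S assms(3) by (auto simp: simple_graph_def)
  then show ?thesis
    using in_G_ab_vertex_equation[OF G] deg_1_nbhd[OF S assms(2,3)] assms(2) by fastforce
qed

lemma in_G_ab_almost_pendant_star:
  assumes G: "in_G_ab a b V E" and yz: "E y z" and dy: "2 \<le> deg V E y"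
    and pendant_nbrs: "\<forall>t. E y t \<longrightarrow> t \<noteq> z \<longrightarrow> deg V E t = 1"
  shows "int (deg V E y) = a + b - 1"
    and "int (deg V E z) - 1 = (int (deg V E y) - 1) * (a - 1 - int (deg V E y))"
proof -
  have S: "simple_graph V E" using G by (simp add: in_G_ab_def)
  have yV: "y \<in> V" and zR: "z \<in> nbhd V E y" using S yz by (auto simp: simple_graph_def nbhd_def)
  let ?R = "nbhd V E y - {z}"
  have card_R: "card ?R = deg V E y - 1"
    using card_Suc_Diff1[OF finite_nbhd[OF S] zR] by (simp add: deg_def)
  have R_pendant: "\<forall>t\<in>?R. deg V E t = 1" using pendant_nbrs by (auto simp: nbhd_def)
  have "card ?R \<noteq> 0" using card_R dy by simp
  then have "?R \<noteq> {}" by (metis card.empty)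
  then obtain x where "x \<in> ?R" by blast
  then have "E x y" and "deg V E x = 1" using R_pendant S by (auto simp: nbhd_def simple_graph_def)
  then show k: "int (deg V E y) = a + b - 1" using in_G_ab_pendant_neighbour_deg[OF G] by simp
  have "(\<Sum>t\<in>?R. int (deg V E t)) = int (card ?R)" using R_pendant by simp
  then have "(\<Sum>t\<in>nbhd V E y. int (deg V E t)) = int (deg V E z) + (int (deg V E y) - 1)"
    using sum.remove[OF finite_nbhd[OF S] zR, of "\<lambda>t. int (deg V E t)"] card_R dy by simp
  then show "int (deg V E z) - 1 = (int (deg V E y) - 1) * (a - 1 - int (deg V E y))"
    using in_G_ab_vertex_equation[OF G yV] k by simp
qed

lemma sum_int_ge_1_le_card:
  fixes f :: "'b \<Rightarrow> int"
  assumes "finite A" and ge_1: "\<And>x. x \<in> A \<Longrightarrow> 1 \<le> f x" and "sum f A \<le> int (card A)" and "x \<in> A"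
  shows "f x = 1"
proof -
  have "(\<Sum>y\<in>A. f y - 1) \<le> 0" using assms(3) by (simp add: sum_subtractf)
  then have "(\<Sum>y\<in>A. f y - 1) = 0" using ge_1 by (meson order.antisym sum_nonneg diff_ge_0_iff_ge)
  then show ?thesis using assms(1,4) ge_1 by (subst (asm) sum_nonneg_eq_0_iff) force+
qed

text \<open>
  If all neighbours of \<open>y\<close> but \<open>z\<close> are pendant, the vertex equations at \<open>y\<close> and \<open>z\<close> leave
  the other neighbours of \<open>z\<close> no degree beyond \<open>1\<close>.
\<close>
lemma in_G_ab_one_non_pendant_neighbour:
  assumes G: "in_G_ab a b V E" and yz: "E y z" and dy: "2 \<le> deg V E y"
    and pendant_nbrs: "\<forall>t. E y t \<longrightarrow> t \<noteq> z \<longrightarrow> deg V E t = 1"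
  shows "at_most_two_non_pendant V E"
proof -
  have S: "simple_graph V E" and C: "connected_graph V E" using G by (auto simp: in_G_ab_def)
  have yV: "y \<in> V" and zV: "z \<in> V" and yQ: "y \<in> nbhd V E z"
    using S yz by (auto simp: simple_graph_def nbhd_def)
  define k m where "k = int (deg V E y)" and "m = int (deg V E z)"
  note at_y = in_G_ab_almost_pendant_star[OF G yz dy pendant_nbrs, folded k_def m_def]
  let ?Q = "nbhd V E z - {y}"
  have card_Q: "int (card ?Q) = m - 1"
    using card_Suc_Diff1[OF finite_nbhd[OF S] yQ] by (simp add: m_def deg_def)
  define s where "s = (\<Sum>t\<in>?Q. int (deg V E t))"
  have "(\<Sum>t\<in>nbhd V E z. int (deg V E t)) = k + s"
    using sum.remove[OF finite_nbhd[OF S] yQ] k_def s_def by simp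
  then have at_z: "s = (m - 1) * (a - 1 - m)"
    using in_G_ab_vertex_equation[OF G zV] at_y(1) m_def by simp
  have Q_pos: "1 \<le> int (deg V E t)" if "t \<in> ?Q" for t
    using deg_pos[OF S, of t z V] that zV S by (auto simp: nbhd_def simple_graph_def)
  then have "int (card ?Q) \<le> s"
    unfolding s_def using sum_mono[of ?Q "\<lambda>_. 1" "\<lambda>t. int (deg V E t)"] by simp
  have "s = int (card ?Q)"
  proof (cases "2 \<le> m")
    case True
    have "s = m - 1"
    proof (rule second_centre_arith[OF _ True at_y(2) at_z])
      show "2 \<le> k" using dy k_def by simp
      show "m - 1 \<le> s" using card_Q \<open>int (card ?Q) \<le> s\<close> by simp
    qed
    then show ?thesis using card_Q by simp
  next
    case False
    then have "card ?Q = 0" using card_Q by simp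
    then have "?Q = {}" using finite_nbhd[OF S, of V z] by simp
    then show ?thesis unfolding s_def by (metis card.empty of_nat_0 sum.empty)
  qed
  then have "\<forall>t\<in>?Q. deg V E t = 1"
    using sum_int_ge_1_le_card[OF finite_Diff[OF finite_nbhd[OF S]] Q_pos] unfolding s_def by fastforce
  then have "\<forall>t. E z t \<longrightarrow> t = y \<or> deg V E t = 1" using S by (auto simp: nbhd_def simple_graph_def)
  moreover have "\<forall>t. E y t \<longrightarrow> t = z \<or> deg V E t = 1" using pendant_nbrs by blast
  ultimately show ?thesis using at_most_two_non_pendantI[OF S C yV] by blast
qed

lemma in_G_ab_pendant_neighbour_deg_ge_3:
  assumes G: "in_G_ab a b V E" and not_two: "\<not> at_most_two_non_pendant V E"
    and x: "deg V E x = 1" "E x y"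
  shows "3 \<le> deg V E y"
proof (rule ccontr)
  assume "\<not> 3 \<le> deg V E y"
  have S: "simple_graph V E" and C: "connected_graph V E" using G by (auto simp: in_G_ab_def)
  have yx: "E y x" and yV: "y \<in> V" and xV: "x \<in> V" using S x by (auto simp: simple_graph_def)
  have "0 < deg V E y" using deg_pos[OF S yx xV] .
  then consider "deg V E y = 1" | "deg V E y = 2" using \<open>\<not> 3 \<le> deg V E y\<close> by linarith
  then show False
  proof cases
    case 1
    then have "nbhd V E y = {x}" "nbhd V E x = {y}" using deg_1_nbhd[OF S] x yx by auto
    then have "\<forall>t. E y t \<longrightarrow> t = x" "\<forall>t. E x t \<longrightarrow> t = y"
      using S by (auto simp: nbhd_def simple_graph_def)
    then show False using at_most_two_non_pendantI[OF S C yV, of x] not_two by blast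
  next
    case 2
    have x_nbr: "x \<in> nbhd V E y" using yx xV by (simp add: nbhd_def)
    then have "card (nbhd V E y - {x}) = 1"
      using 2 card_Suc_Diff1[OF finite_nbhd[OF S] x_nbr] by (simp add: deg_def)
    then obtain z where z: "nbhd V E y - {x} = {z}" by (auto simp: card_1_singleton_iff)
    then have "E y z" by (auto simp: nbhd_def)
    moreover have "\<forall>t. E y t \<longrightarrow> t \<noteq> z \<longrightarrow> deg V E t = 1"
      using z x S by (auto simp: nbhd_def simple_graph_def)
    ultimately show False
      using in_G_ab_one_non_pendant_neighbour[OF G, of y z] 2 not_two by simp
  qed
qed

lemma in_G_ab_pendant_degree_bound:
  assumes G: "in_G_ab a b V E" and not_two: "\<not> at_most_two_non_pendant V E"
    and "pendant V E x"
  shows "3 \<le> a + b - 1"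
proof -
  have S: "simple_graph V E" using G by (simp add: in_G_ab_def)
  obtain y where x: "deg V E x = 1" "E x y"
    using assms(3) S by (auto simp: pendant_def deg_def nbhd_def card_1_singleton_iff)
  have "int (deg V E y) = a + b - 1" using in_G_ab_pendant_neighbour_deg[OF G x] .
  moreover have "3 \<le> deg V E y" using in_G_ab_pendant_neighbour_deg_ge_3[OF G not_two x] .
  ultimately show ?thesis by linarith
qed

lemma delete_pendant_steps_subset: "(delete_pendant_step E)\<^sup>*\<^sup>* V S \<Longrightarrow> S \<subseteq> V"
  by (induction rule: rtranclp_induct) (auto simp: delete_pendant_step_def)

text \<open>
  Outside double stars, pendant deletion never creates new pendant vertices: a vertex that
  becomes pendant during the deletion had all neighbours but one pendant already in \<open>G\<close>.
\<close>
lemma in_G_ab_deleted_vertices_pendant: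
  assumes G: "in_G_ab a b V E" and not_two: "\<not> at_most_two_non_pendant V E"
    and "(delete_pendant_step E)\<^sup>*\<^sup>* V S"
  shows "\<forall>x\<in>V - S. deg V E x = 1"
  using assms(3)
proof (induction rule: rtranclp_induct)
  case (step S S')
  have S_graph: "simple_graph V E" using G by (simp add: in_G_ab_def)
  obtain x where "pendant S E x" and S': "S' = S - {x}"
    using step.hyps(2) by (auto simp: delete_pendant_step_def)
  then obtain z where z: "nbhd S E x = {z}" and "x \<in> S"
    by (auto simp: pendant_def deg_def card_1_singleton_iff)
  have "deg V E x = 1"
  proof (rule ccontr)
    assume "deg V E x \<noteq> 1"
    moreover have "1 \<le> deg V E x"
      using \<open>pendant S E x\<close> deg_mono[OF S_graph delete_pendant_steps_subset[OF step.hyps(1)]]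
      by (metis pendant_def)
    ultimately have "2 \<le> deg V E x" by simp
    moreover have "E x z" using z by (auto simp: nbhd_def)
    moreover have "\<forall>t. E x t \<longrightarrow> t \<noteq> z \<longrightarrow> deg V E t = 1"
      using z step.IH S_graph by (auto simp: nbhd_def simple_graph_def)
    ultimately show False using in_G_ab_one_non_pendant_neighbour[OF G] not_two by blast
  qed
  then show ?case using step.IH S' by auto
qed simp

lemma in_G_ab_equation_on_subgraph:
  assumes G: "in_G_ab a b V E" and "S \<subseteq> V" and pendant_outside: "\<forall>y\<in>V - S. deg V E y = 1"
    and "x \<in> V"
  obtains t where "deg V E x = deg S E x + t"
    and "(\<Sum>y\<in>nbhd S E x. int (deg V E y)) + int t
      = (int (deg V E x) - 1) * (a - 1 - int (deg V E x)) + (a + b - 1)"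
    and "0 < t \<Longrightarrow> int (deg V E x) = a + b - 1"
proof
  let ?t = "card (nbhd V E x - S)"
  have S: "simple_graph V E" using G by (simp add: in_G_ab_def)
  show "deg V E x = deg S E x + ?t" using deg_split[OF S \<open>S \<subseteq> V\<close>] .
  show "(\<Sum>y\<in>nbhd S E x. int (deg V E y)) + int ?t
      = (int (deg V E x) - 1) * (a - 1 - int (deg V E x)) + (a + b - 1)"
    using nbhd_degree_sum_split[OF S \<open>S \<subseteq> V\<close> pendant_outside] in_G_ab_vertex_equation[OF G \<open>x \<in> V\<close>]
    by simp
  assume "0 < ?t"
  then obtain y where "y \<in> nbhd V E x - S" by (metis all_not_in_conv card.empty less_irrefl)
  then have "deg V E y = 1" "E y x" using pendant_outside S by (auto simp: nbhd_def simple_graph_def)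
  then show "int (deg V E x) = a + b - 1" using in_G_ab_pendant_neighbour_deg[OF G] by blast
qed

section \<open>Degrees along an internal cycle\<close>

lemma internal_cycle_inner_nbhd:
  assumes S: "simple_graph V E" and cyc: "internal_cycle B E u p" and i: "i \<in> {1..p - 1}"
  shows "nbhd B E (u i) = {u (i - 1), u (i + 1)}" and "u (i - 1) \<noteq> u (i + 1)"
proof -
  have p: "3 \<le> p" and up: "u p = u 0" and uB: "\<And>j. j \<le> p \<Longrightarrow> u j \<in> B"
    and inj: "inj_on u {0..<p}" and step: "\<And>j. j < p \<Longrightarrow> E (u j) (u (Suc j))"
    and deg_i: "deg B E (u i) = 2"
    using cyc i by (auto simp: internal_cycle_def)
  show distinct: "u (i - 1) \<noteq> u (i + 1)"
  proof (cases "i + 1 = p")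
    case True
    then show ?thesis using inj_on_contraD[OF inj, of "i - 1" 0] up i p by auto
  next
    case False
    then have "i - 1 \<noteq> i + 1" "i - 1 \<in> {0..<p}" "i + 1 \<in> {0..<p}" using i by auto
    then show ?thesis using inj_on_contraD[OF inj] by blast
  qed
  have "E (u (i - 1)) (u i)" "E (u i) (u (i + 1))" using step[of "i - 1"] step[of i] i by auto
  then have "{u (i - 1), u (i + 1)} \<subseteq> nbhd B E (u i)"
    using uB[of "i - 1"] uB[of "i + 1"] i S by (auto simp: nbhd_def simple_graph_def)
  moreover have "card {u (i - 1), u (i + 1)} = card (nbhd B E (u i))"
    using distinct deg_i by (simp add: deg_def)
  ultimately show "nbhd B E (u i) = {u (i - 1), u (i + 1)}"
    using card_subset_eq[OF finite_nbhd[OF S]] by metis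
qed

lemma internal_cycle_not_at_most_two_non_pendant:
  assumes S: "simple_graph V E" and "B \<subseteq> V" and cyc: "internal_cycle B E u p"
  shows "\<not> at_most_two_non_pendant V E"
proof -
  have p: "3 \<le> p" and inj: "inj_on u {0..<p}" and uV: "\<And>j. j \<le> p \<Longrightarrow> u j \<in> V"
    and "3 \<le> deg B E (u 0)" "deg B E (u 1) = 2" "deg B E (u 2) = 2"
    using cyc \<open>B \<subseteq> V\<close> by (auto simp: internal_cycle_def)
  then have "2 \<le> deg V E (u j)" if "j \<in> {0, 1, 2}" for j
    using that deg_mono[OF S \<open>B \<subseteq> V\<close>, of "u j"] by auto
  moreover have "u j \<in> V" if "j \<in> {0, 1, 2}" for j using that p uV by auto
  moreover have "u 0 \<noteq> u 1" "u 0 \<noteq> u 2" "u 1 \<noteq> u 2"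
    using inj_on_contraD[OF inj] p by auto
  ultimately show ?thesis unfolding at_most_two_non_pendant_def
    by (metis insertCI numeral_le_one_iff semiring_norm(69))
qed

lemma internal_cycle_inner_degree:
  assumes G: "in_G_ab a b V E" and "B \<subseteq> V" and pendant_outside: "\<forall>y\<in>V - B. deg V E y = 1"
    and cyc: "internal_cycle B E u p" and i: "i \<in> {1..p - 1}"
  defines "D j \<equiv> int (deg V E (u j))"
  shows "(D i = 2 \<or> D i = a + b - 1)
      \<and> D (i - 1) + D (i + 1) + (D i - 2) = (D i - 1) * (a - 1 - D i) + (a + b - 1)"
proof -
  have S: "simple_graph V E" using G by (simp add: in_G_ab_def)
  have "u i \<in> V" and deg_i: "deg B E (u i) = 2"
    using cyc i \<open>B \<subseteq> V\<close> by (auto simp: internal_cycle_def)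
  then obtain t where "deg V E (u i) = deg B E (u i) + t"
    and "(\<Sum>y\<in>nbhd B E (u i). int (deg V E y)) + int t = (D i - 1) * (a - 1 - D i) + (a + b - 1)"
    and "0 < t \<Longrightarrow> D i = a + b - 1"
    using in_G_ab_equation_on_subgraph[OF G \<open>B \<subseteq> V\<close> pendant_outside] unfolding D_def by blast
  moreover have "(\<Sum>y\<in>nbhd B E (u i). int (deg V E y)) = D (i - 1) + D (i + 1)"
    using internal_cycle_inner_nbhd[OF S cyc i] by (simp add: D_def)
  ultimately show ?thesis using deg_i unfolding D_def by auto
qed

lemma internal_cycle_degree_pattern:
  assumes G: "in_G_ab a b V E" and "B \<subseteq> V" and pendant_outside: "\<forall>y\<in>V - B. deg V E y = 1"
    and no_pendant: "\<forall>x\<in>B. \<not> pendant B E x"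
    and cyc: "internal_cycle B E u p" and nbhd_v: "nbhd B E (u 0) = {w, u 1, u (p - 1)}"
    and k: "3 \<le> a + b - 1"
  shows "\<exists>t. cycle_degree_pattern a (a + b - 1) p (\<lambda>i. int (deg V E (u i))) (int (deg V E w)) t"
proof -
  have S: "simple_graph V E" using G by (simp add: in_G_ab_def)
  define D where "D i = int (deg V E (u i))" for i
  have p: "3 \<le> p" and up: "u p = u 0" and uV: "\<And>j. j \<le> p \<Longrightarrow> u j \<in> V"
    and inj: "inj_on u {0..<p}" and deg_v: "3 \<le> deg B E (u 0)"
    using cyc \<open>B \<subseteq> V\<close> by (auto simp: internal_cycle_def)
  have "u 1 \<noteq> u (p - 1)" using inj_on_contraD[OF inj, of 1 "p - 1"] p by auto
  moreover have "3 \<le> card {w, u 1, u (p - 1)}" using deg_v nbhd_v by (simp add: deg_def)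
  ultimately have distinct: "w \<noteq> u 1" "w \<noteq> u (p - 1)" "u 1 \<noteq> u (p - 1)"
    by (auto simp: card_insert_if split: if_splits)
  obtain t where "deg V E (u 0) = deg B E (u 0) + t"
    and sum: "(\<Sum>y\<in>nbhd B E (u 0). int (deg V E y)) + int t
      = (D 0 - 1) * (a - 1 - D 0) + (a + b - 1)"
    and t_pos: "0 < t \<Longrightarrow> D 0 = a + b - 1"
    using in_G_ab_equation_on_subgraph[OF G \<open>B \<subseteq> V\<close> pendant_outside uV[of 0]]
    unfolding D_def by blast
  moreover have "deg B E (u 0) = 3" using nbhd_v distinct by (simp add: deg_def)
  ultimately have t: "D 0 = 3 + int t" by (simp add: D_def)
  have at_v: "int (deg V E w) + D 1 + D (p - 1) + int t = (D 0 - 1) * (a - 1 - D 0) + (a + b - 1)"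
    using sum nbhd_v distinct by (simp add: D_def add.assoc)
  have "w \<in> B" "E w (u 0)" "u 0 \<in> B" using nbhd_v S cyc by (auto simp: nbhd_def simple_graph_def internal_cycle_def)
  then have "2 \<le> deg B E w" using deg_pos[OF S] no_pendant by (fastforce simp: pendant_def)
  then have "2 \<le> deg V E w" using deg_mono[OF S \<open>B \<subseteq> V\<close>, of w] by simp
  then have "cycle_degree_pattern a (a + b - 1) p D (int (deg V E w)) (int t)"
    unfolding cycle_degree_pattern_def
    using p k up internal_cycle_inner_degree[OF G \<open>B \<subseteq> V\<close> pendant_outside cyc] t at_v t_pos
    by (simp add: D_def)
  then show ?thesis unfolding D_def by blast
qed

theorem lemma3p1:
  fixes a b :: int and V :: "'a set" and E :: "'a \<Rightarrow> 'a \<Rightarrow> bool"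
    and B :: "'a set" and u :: "nat \<Rightarrow> 'a" and p :: nat and v w :: 'a
  assumes "in_G_ab a b V E"
    and "tricyclic V E"
    and "\<exists>x\<in>V. pendant V E x"
    and "is_base V E B"
    and "internal_cycle B E u p"
    and "u 0 = v"
    and "nbhd B E v = {w, u 1, u (p - 1)}"
  shows "deg V E v = 3 \<and> p = 3 \<and> in_G_ab 6 (-1) V E \<and> deg V E w = 2
    \<and> ((deg V E (u 1) = 2 \<and> int (deg V E (u (p - 1))) = a + b - 1)
       \<or> (deg V E (u (p - 1)) = 2 \<and> int (deg V E (u 1)) = a + b - 1))
    \<and> a + b - 1 = 4"
proof -
  have S: "simple_graph V E" using assms(1) by (simp add: in_G_ab_def)
  have deletion: "(delete_pendant_step E)\<^sup>*\<^sup>* V B" and no_pendant: "\<forall>x\<in>B. \<not> pendant B E x"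
    using assms(4) by (auto simp: is_base_def)
  have B_sub: "B \<subseteq> V" using deletion by (rule delete_pendant_steps_subset)
  have not_two: "\<not> at_most_two_non_pendant V E"
    using S B_sub assms(5) by (rule internal_cycle_not_at_most_two_non_pendant)
  have pendant_outside: "\<forall>x\<in>V - B. deg V E x = 1"
    using assms(1) not_two deletion by (rule in_G_ab_deleted_vertices_pendant)
  have "3 \<le> a + b - 1" using assms(3) in_G_ab_pendant_degree_bound[OF assms(1) not_two] by blast
  moreover have "nbhd B E (u 0) = {w, u 1, u (p - 1)}" using assms(6,7) by simp
  ultimately have "\<exists>t. cycle_degree_pattern a (a + b - 1) p (\<lambda>i. int (deg V E (u i))) (int (deg V E w)) t"
    by (intro internal_cycle_degree_pattern[OF assms(1) B_sub pendant_outside no_pendant assms(5)])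
  then have solution: "int (deg V E (u 0)) = 3 \<and> p = 3 \<and> a = 6 \<and> a + b - 1 = 4
    \<and> int (deg V E w) = 2 \<and> (int (deg V E (u 1)) = 2 \<and> int (deg V E (u (p - 1))) = 4
       \<or> int (deg V E (u (p - 1))) = 2 \<and> int (deg V E (u 1)) = 4)"
    using cycle_degree_pattern_solution by blast
  then have "a = 6" "b = -1" by auto
  with solution show ?thesis using assms(1,6) by auto
qed

end
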